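(* Let $(X,\mathcal{M})$ be a measurable space, $\Sigma$ a compact Hausdorff group with Haar probability measure $\mu_\Sigma$ acting measurably on $X$ via $T_\sigma$. Let $n\in\mathbb{Z}^+$ and let $V$ be a linear subspace of $\mathcal{M}_b(X)^n$ that is closed under $\Sigma$ (i.e. $\gamma\circ T_\sigma\in V$ for all $\gamma\in V$, $\sigma\in\Sigma$) and satisfies $S_\Sigma[V]\subset V$. Let $H:V\times\mathcal{P}(X)\times\mathcal{P}(X)\to[-\infty,\infty)$ and $\Gamma\subset V$, and set $D_H^\Gamma(Q\|P)=\sup_{\gamma\in\Gamma}H(\gamma;Q,P)$. Suppose that for all $Q,P\in\mathcal{P}(X)$ the map $H(\cdot;Q,P)$ is concave and upper semicontinuous on $V$ with respect to the $M(X)$-topology, and that $H(\gamma\circ T_\sigma;Q,P)=H(\gamma;Q\circ T_\sigma^{-1},P\circ T_\sigma^{-1})$ for all $\sigma\in\Sigma$, $\gamma\in V$, $Q,P\in\mathcal{P}(X)$. Then for all $\Sigma$-invariant $Q,P$, $D_H^\Gamma(Q\|P)\le D_H^{S_\Sigma[\Gamma]}(Q\|P)$. If in addition $S_\Sigma[\Gamma]\subset\Gamma$, then $S_\Sigma[\Gamma]=\Gamma^{\mathrm{inv}}_\Sigma$ and $D_H^\Gamma(Q\|P)=D_H^{\Gamma^{\mathrm{inv}}_\Sigma}(Q\|P)$ for all $\Sigma$-invariant $Q,P$.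
   Context: $S_\Sigma[\gamma](x)=\int_\Sigma\gamma(T_\sigma(x))\mu_\Sigma(d\sigma)$, applied componentwise to elements of $\mathcal{M}_b(X)^n$. $\Gamma^{\mathrm{inv}}_\Sigma=\{\gamma\in\Gamma:\gamma\circ T_\sigma=\gamma\ \forall\sigma\}$. A probability measure $P$ is $\Sigma$-invariant if $P\circ T_\sigma^{-1}=P$ for all $\sigma$. $M(X)$-topology: with $M(X)$ the finite signed measures on $X$, for $\nu\in M(X)^n$ let $\tau_\nu(\gamma)=\sum_{i=1}^n\int\gamma^i d\nu_i$; $V$ is given the weakest topology making every $\tau_\nu$ continuous. *)

theory Defs
  imports "HOL-Analysis.Analysis" "HOL-Probability.Probability"
begin

text \<open>Bounded measurable R^n-valued functions on X (the underlying type, space M = UNIV),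
  i.e. elements of Mb(X)^n, componentwise.\<close>
definition Mb :: "'a measure \<Rightarrow> ('a \<Rightarrow> real^'n) set" where
  "Mb M = {\<gamma>. \<forall>i. (\<lambda>x. \<gamma> x $ i) \<in> borel_measurable M \<and> bounded (range (\<lambda>x. \<gamma> x $ i))}"

definition Prob :: "'a measure \<Rightarrow> 'a measure set" where
  "Prob M = {P. prob_space P \<and> sets P = sets M}"

text \<open>Finite signed measures on (X, M), represented by a pair (nu+, nu-) of finite measures
  (Jordan decomposition: nu = nu+ - nu-).\<close>
definition signed_meas :: "'a measure \<Rightarrow> ('a measure \<times> 'a measure) set" where
  "signed_meas M = {(p, q). finite_measure p \<and> finite_measure q \<and> sets p = sets M \<and> sets q = sets M}"

definition sintegral :: "('a measure \<times> 'a measure) \<Rightarrow> ('a \<Rightarrow> real) \<Rightarrow> real" where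
  "sintegral \<nu> f = (\<integral>x. f x \<partial>(fst \<nu>)) - (\<integral>x. f x \<partial>(snd \<nu>))"

definition tau :: "('n::finite \<Rightarrow> 'a measure \<times> 'a measure) \<Rightarrow> ('a \<Rightarrow> real^'n) \<Rightarrow> real" where
  "tau \<nu> \<gamma> = (\<Sum>i\<in>UNIV. sintegral (\<nu> i) (\<lambda>x. \<gamma> x $ i))"

definition MX_topology :: "'a measure \<Rightarrow> ('a \<Rightarrow> real^'n::finite) set \<Rightarrow> ('a \<Rightarrow> real^'n) topology" where
  "MX_topology M V = topology_generated_by
     {{\<gamma> \<in> V. tau \<nu> \<gamma> \<in> U} | \<nu> U. (\<forall>i. \<nu> i \<in> signed_meas M) \<and> open U}"

definition usc_on :: "'b topology \<Rightarrow> ('b \<Rightarrow> ereal) \<Rightarrow> bool" where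
  "usc_on X f \<longleftrightarrow> (\<forall>a. openin X {x \<in> topspace X. f x < a})"

definition Ssym :: "'g measure \<Rightarrow> ('g \<Rightarrow> 'a \<Rightarrow> 'a) \<Rightarrow> ('a \<Rightarrow> real^'n) \<Rightarrow> ('a \<Rightarrow> real^'n)" where
  "Ssym \<mu> T \<gamma> = (\<lambda>x. \<chi> i. \<integral>\<sigma>. \<gamma> (T \<sigma> x) $ i \<partial>\<mu>)"

definition Gamma_inv :: "('g \<Rightarrow> 'a \<Rightarrow> 'a) \<Rightarrow> ('a \<Rightarrow> 'b) set \<Rightarrow> ('a \<Rightarrow> 'b) set" where
  "Gamma_inv T \<Gamma> = {\<gamma> \<in> \<Gamma>. \<forall>\<sigma>. \<gamma> \<circ> T \<sigma> = \<gamma>}"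

definition invariant_meas :: "'a measure \<Rightarrow> ('g \<Rightarrow> 'a \<Rightarrow> 'a) \<Rightarrow> 'a measure \<Rightarrow> bool" where
  "invariant_meas M T P \<longleftrightarrow> (\<forall>\<sigma>. distr P M (T \<sigma>) = P)"

definition DH :: "('f \<Rightarrow> 'm \<Rightarrow> 'm \<Rightarrow> ereal) \<Rightarrow> 'f set \<Rightarrow> 'm \<Rightarrow> 'm \<Rightarrow> ereal" where
  "DH H \<Gamma> Q P = (SUP \<gamma>\<in>\<Gamma>. H \<gamma> Q P)"

end

(*
  For invariant Q and P the map h = H(-; Q, P) is constant on every orbit {gamma o T sigma},
  so by concavity h >= h gamma on the convex hull of the orbit.  The symmetrization S gamma is
  the Haar average of the orbit, and it lies in the M(X)-closure of this convex hull: a basic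
  neighbourhood only tests finitely many functionals tau_nu, and the Haar integrals of the
  finitely many bounded functions sigma |-> tau_nu(gamma o T sigma) are approximated
  simultaneously by one convex combination of point evaluations (quantize their values and
  pick a point in every level cell).  Upper semicontinuity then gives h (S gamma) >= h gamma.
  Right invariance of the Haar measure makes every S gamma invariant, and an invariant gamma
  is its own average; this identifies S[Gamma] with Gamma_inv when S[Gamma] is contained in Gamma.
*)

theory Submission
  imports Defs
begin

lemma finite_image_floor_quantization:
  fixes F :: "('g \<Rightarrow> real) set"
  assumes "finite F" "\<And>\<phi>. \<phi> \<in> F \<Longrightarrow> bounded (\<phi> ` S)"
  shows "finite ((\<lambda>\<sigma>. restrict (\<lambda>\<phi>. \<lfloor>\<phi> \<sigma> / d\<rfloor>) F) ` S)"
proof -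
  have "\<forall>\<phi>\<in>F. \<exists>b. \<forall>\<sigma>\<in>S. \<bar>\<phi> \<sigma>\<bar> \<le> b"
    using assms(2) by (auto simp: bounded_real)
  then obtain B where B: "\<And>\<phi> \<sigma>. \<phi> \<in> F \<Longrightarrow> \<sigma> \<in> S \<Longrightarrow> \<bar>\<phi> \<sigma>\<bar> \<le> B \<phi>"
    by metis
  have "\<lfloor>\<phi> \<sigma> / d\<rfloor> \<in> {- \<lceil>\<bar>B \<phi> / d\<bar>\<rceil> .. \<lceil>\<bar>B \<phi> / d\<bar>\<rceil>}" if "\<phi> \<in> F" "\<sigma> \<in> S" for \<phi> \<sigma>
  proof -
    have "\<bar>\<phi> \<sigma> / d\<bar> \<le> \<bar>B \<phi> / d\<bar>"
      using B[OF that] by (simp add: divide_right_mono)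
    then show ?thesis by (simp only: abs_le_iff atLeastAtMost_iff) linarith
  qed
  then have "(\<lambda>\<sigma>. restrict (\<lambda>\<phi>. \<lfloor>\<phi> \<sigma> / d\<rfloor>) F) ` S \<subseteq> PiE F (\<lambda>\<phi>. {- \<lceil>\<bar>B \<phi> / d\<bar>\<rceil> .. \<lceil>\<bar>B \<phi> / d\<bar>\<rceil>})"
    by auto
  then show ?thesis
    by (rule finite_subset) (simp add: finite_PiE assms(1))
qed

lemma (in finite_measure) integrable_bounded:
  fixes f :: "'a \<Rightarrow> real"
  assumes "f \<in> borel_measurable M" and "bounded (f ` space M)"
  shows "integrable M f"
proof -
  obtain B where "\<forall>x\<in>space M. \<bar>f x\<bar> \<le> B"
    using assms(2) by (auto simp: bounded_real)
  then show ?thesis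
    using assms(1) by (intro integrable_const_bound[where B=B]) auto
qed

lemma simple_function_floor_quantization:
  fixes F :: "('a \<Rightarrow> real) set"
  assumes F: "finite F" and meas: "\<And>\<phi>. \<phi> \<in> F \<Longrightarrow> \<phi> \<in> borel_measurable M"
    and bnd: "\<And>\<phi>. \<phi> \<in> F \<Longrightarrow> bounded (\<phi> ` space M)"
  shows "simple_function M (\<lambda>\<sigma>. restrict (\<lambda>\<phi>. \<lfloor>\<phi> \<sigma> / d\<rfloor>) F)" (is "simple_function M ?q")
  unfolding simple_function_def
proof
  show "finite (?q ` space M)"
    by (rule finite_image_floor_quantization[OF F bnd])
  have "?q x = ?q \<sigma> \<longleftrightarrow> (\<forall>\<phi>\<in>F. \<lfloor>\<phi> x / d\<rfloor> = \<lfloor>\<phi> \<sigma> / d\<rfloor>)" for x \<sigma>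
  proof
    show "\<forall>\<phi>\<in>F. \<lfloor>\<phi> x / d\<rfloor> = \<lfloor>\<phi> \<sigma> / d\<rfloor>" if "?q x = ?q \<sigma>"
    proof
      fix \<phi> assume "\<phi> \<in> F"
      then show "\<lfloor>\<phi> x / d\<rfloor> = \<lfloor>\<phi> \<sigma> / d\<rfloor>"
        using fun_cong[OF that, of \<phi>] by simp
    qed
  qed (auto intro!: restrict_ext)
  then have "?q -` {?q \<sigma>} \<inter> space M = {x \<in> space M. \<forall>\<phi>\<in>F. \<lfloor>\<phi> x / d\<rfloor> = \<lfloor>\<phi> \<sigma> / d\<rfloor>}" for \<sigma>
    by auto
  also have "\<dots> \<sigma> \<in> sets M" for \<sigma>
    using meas F by measurable
  finally show "\<forall>v\<in>?q ` space M. ?q -` {v} \<inter> space M \<in> sets M"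
    by blast
qed

lemma (in finite_measure) integral_comp_simple_function:
  fixes f :: "'b \<Rightarrow> real"
  assumes q: "simple_function M q"
  shows "integrable M (\<lambda>x. f (q x))"
    and "(\<integral>x. f (q x) \<partial>M) = (\<Sum>v\<in>q ` space M. measure M {x \<in> space M. q x = v} * f v)"
proof -
  have "simple_function M (\<lambda>x. f (q x))"
    by (rule simple_function_compose1[OF q])
  then have sbi: "Bochner_Integration.simple_bochner_integrable M (\<lambda>x. f (q x))"
    by (rule simple_bochner_integrable.intros) simp
  then show "integrable M (\<lambda>x. f (q x))"
    using has_bochner_integral_simple_bochner_integrable integrable.intros by blast
  have "(\<integral>x. f (q x) \<partial>M) = Bochner_Integration.simple_bochner_integral M (\<lambda>x. f (q x))"
    by (rule simple_bochner_integrable_eq_integral[OF sbi, symmetric])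
  also have "\<dots> = (\<Sum>v\<in>q ` space M. measure M {x \<in> space M. q x = v} *\<^sub>R f v)"
    by (rule simple_bochner_integral_partition[OF sbi q]) auto
  finally show "(\<integral>x. f (q x) \<partial>M) = (\<Sum>v\<in>q ` space M. measure M {x \<in> space M. q x = v} * f v)"
    by simp
qed

lemma (in prob_space) expectation_approx_by_convex_comb:
  fixes F :: "('a \<Rightarrow> real) set"
  assumes F: "finite F" and meas: "\<And>\<phi>. \<phi> \<in> F \<Longrightarrow> \<phi> \<in> borel_measurable M"
    and bnd: "\<And>\<phi>. \<phi> \<in> F \<Longrightarrow> bounded (\<phi> ` space M)" and "0 < e"
  shows "\<exists>I t. finite I \<and> (\<forall>\<sigma>\<in>I. 0 \<le> t \<sigma>) \<and> sum t I = 1 \<and>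
           (\<forall>\<phi>\<in>F. \<bar>(\<Sum>\<sigma>\<in>I. t \<sigma> * \<phi> \<sigma>) - expectation \<phi>\<bar> < e)"
proof -
  define d where "d = e / 2"
  have "0 < d" using \<open>0 < e\<close> by (simp add: d_def)
  define q where "q \<sigma> = restrict (\<lambda>\<phi>. \<lfloor>\<phi> \<sigma> / d\<rfloor>) F" for \<sigma>
  have q: "simple_function M q"
    unfolding q_def by (rule simple_function_floor_quantization[OF F meas bnd])
  define r where "r = inv_into (space M) q"
  have r: "r v \<in> space M" "q (r v) = v" if "v \<in> q ` space M" for v
    using that by (simp_all add: r_def inv_into_into f_inv_into_f)
  \<comment> \<open>one point in each level cell of \<open>q\<close>, weighted by the measure of the cell\<close>
  define I where "I = r ` q ` space M"
  define t where "t \<sigma> = measure M {x \<in> space M. q x = q \<sigma>}" for \<sigma>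
  have sum_eq_expectation: "(\<Sum>\<sigma>\<in>I. t \<sigma> * f \<sigma>) = expectation (\<lambda>\<sigma>. f (r (q \<sigma>)))" for f
  proof -
    have "inj_on r (q ` space M)"
      by (simp add: r_def inj_on_inv_into)
    then show ?thesis
      unfolding I_def using integral_comp_simple_function(2)[OF q, of "\<lambda>v. f (r v)"]
      by (simp add: sum.reindex t_def r)
  qed
  have "\<bar>(\<Sum>\<sigma>\<in>I. t \<sigma> * \<phi> \<sigma>) - expectation \<phi>\<bar> < e" if \<phi>: "\<phi> \<in> F" for \<phi>
  proof -
    have close: "\<bar>\<phi> (r (q \<sigma>)) - \<phi> \<sigma>\<bar> \<le> d" if "\<sigma> \<in> space M" for \<sigma>
    proof -
      have "\<lfloor>\<phi> (r (q \<sigma>)) / d\<rfloor> = \<lfloor>\<phi> \<sigma> / d\<rfloor>"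
        using fun_cong[OF r(2)[of "q \<sigma>"], of \<phi>] \<phi> \<open>\<sigma> \<in> space M\<close> by (simp add: q_def)
      then have "\<bar>(\<phi> (r (q \<sigma>)) - \<phi> \<sigma>) / d\<bar> \<le> 1"
        by (simp add: diff_divide_distrib) linarith
      then show ?thesis using \<open>0 < d\<close> by simp
    qed
    have "integrable M \<phi>" and "integrable M (\<lambda>\<sigma>. \<phi> (r (q \<sigma>)))"
      using integrable_bounded[OF meas[OF \<phi>] bnd[OF \<phi>]] integral_comp_simple_function(1)[OF q]
      by auto
    then have "\<bar>expectation (\<lambda>\<sigma>. \<phi> (r (q \<sigma>))) - expectation \<phi>\<bar>
        = \<bar>expectation (\<lambda>\<sigma>. \<phi> (r (q \<sigma>)) - \<phi> \<sigma>)\<bar>"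
      by simp
    also have "\<dots> \<le> expectation (\<lambda>\<sigma>. \<bar>\<phi> (r (q \<sigma>)) - \<phi> \<sigma>\<bar>)"
      by (rule integral_abs_bound)
    also have "\<dots> \<le> d"
      using close \<open>integrable M \<phi>\<close> \<open>integrable M (\<lambda>\<sigma>. \<phi> (r (q \<sigma>)))\<close>
      by (intro integral_le_const) auto
    finally show ?thesis
      using \<open>0 < e\<close> by (simp add: sum_eq_expectation d_def)
  qed
  moreover have "sum t I = 1"
    using sum_eq_expectation[of "\<lambda>_. 1"] by (simp add: prob_space)
  moreover have "finite I"
    unfolding I_def using q by (simp add: simple_function_def)
  ultimately show ?thesis
    by (intro exI[of _ I] exI[of _ t]) (auto simp: t_def)
qed

lemma bounded_sum_comp:
  fixes f :: "'i \<Rightarrow> 'a \<Rightarrow> 'b::real_normed_vector"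
  assumes "finite I" and "\<And>i. i \<in> I \<Longrightarrow> bounded (f i ` S)"
  shows "bounded ((\<lambda>x. \<Sum>i\<in>I. f i x) ` S)"
  using assms
  by (induction I rule: finite_induct) (auto simp: image_constant_conv intro: bounded_plus_comp)

lemma convex_sum_pointwise:
  fixes C :: "('a \<Rightarrow> 'b::real_vector) set"
  assumes convex: "\<And>f g t. f \<in> C \<Longrightarrow> g \<in> C \<Longrightarrow> 0 < t \<Longrightarrow> t < 1
      \<Longrightarrow> (\<lambda>x. t *\<^sub>R f x + (1 - t) *\<^sub>R g x) \<in> C"
    and "finite I" and "\<And>i. i \<in> I \<Longrightarrow> f i \<in> C"
    and "\<And>i. i \<in> I \<Longrightarrow> 0 \<le> t i" and "sum t I = 1"
  shows "(\<lambda>x. \<Sum>i\<in>I. t i *\<^sub>R f i x) \<in> C"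
  using assms(2-5)
proof (induction I arbitrary: t rule: finite_induct)
  case empty
  then show ?case by simp
next
  case (insert i I)
  have "0 \<le> sum t I" and sum_insert: "t i + sum t I = 1"
    using insert by (simp_all add: sum_nonneg)
  then consider "t i = 1" | "t i < 1"
    by linarith
  then show ?case
  proof cases
    case 1
    then have "\<forall>j\<in>I. t j = 0"
      using sum_insert insert by (simp add: sum_nonneg_eq_0_iff)
    then show ?thesis using insert 1 by simp
  next
    case 2
    define s where "s = 1 - t i"
    have "0 < s" using 2 by (simp add: s_def)
    have sum_I: "sum t I = s" using sum_insert by (simp add: s_def)
    define g where "g = (\<lambda>x. \<Sum>j\<in>I. (t j / s) *\<^sub>R f j x)"
    have "g \<in> C"
      unfolding g_def using insert \<open>0 < s\<close>
      by (intro insert.IH) (auto simp: sum_divide_distrib[symmetric] sum_I)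
    have "(\<lambda>x. \<Sum>j\<in>insert i I. t j *\<^sub>R f j x) = (\<lambda>x. t i *\<^sub>R f i x + s *\<^sub>R g x)"
      using insert.hyps \<open>0 < s\<close> by (simp add: g_def scaleR_sum_right)
    moreover have "(\<lambda>x. t i *\<^sub>R f i x + s *\<^sub>R g x) \<in> C"
    proof (cases "t i = 0")
      case True
      then show ?thesis using \<open>g \<in> C\<close> by (simp add: s_def)
    next
      case False
      then show ?thesis
        using convex[of "f i" g "t i"] insert.prems \<open>g \<in> C\<close> 2 by (simp add: s_def less_le)
    qed
    ultimately show ?thesis by simp
  qed
qed

lemma concave_superlevel_set_convex:
  fixes h :: "('a \<Rightarrow> 'b::real_vector) \<Rightarrow> ereal"
  assumes V_convex: "\<And>f g t. f \<in> V \<Longrightarrow> g \<in> V \<Longrightarrow> 0 < t \<Longrightarrow> t < 1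
      \<Longrightarrow> (\<lambda>x. t *\<^sub>R f x + (1 - t) *\<^sub>R g x) \<in> V"
    and concave: "\<And>f g t. f \<in> V \<Longrightarrow> g \<in> V \<Longrightarrow> 0 < t \<Longrightarrow> t < 1
      \<Longrightarrow> ereal t * h f + ereal (1 - t) * h g \<le> h (\<lambda>x. t *\<^sub>R f x + (1 - t) *\<^sub>R g x)"
    and f: "f \<in> {\<eta> \<in> V. c \<le> h \<eta>}" and g: "g \<in> {\<eta> \<in> V. c \<le> h \<eta>}" and "0 < s" "s < 1"
  shows "(\<lambda>x. s *\<^sub>R f x + (1 - s) *\<^sub>R g x) \<in> {\<eta> \<in> V. c \<le> h \<eta>}"
proof -
  have "c = ereal s * c + ereal (1 - s) * c"
    using \<open>0 < s\<close> \<open>s < 1\<close> by (cases c) (auto simp: algebra_simps)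
  also have "\<dots> \<le> ereal s * h f + ereal (1 - s) * h g"
    using f g \<open>0 < s\<close> \<open>s < 1\<close> by (intro add_mono ereal_mult_left_mono) auto
  also have "\<dots> \<le> h (\<lambda>x. s *\<^sub>R f x + (1 - s) *\<^sub>R g x)"
    using concave f g \<open>0 < s\<close> \<open>s < 1\<close> by blast
  finally show ?thesis
    using V_convex f g \<open>0 < s\<close> \<open>s < 1\<close> by blast
qed

lemma topspace_MX_topology [simp]: "topspace (MX_topology M V) = V"
proof -
  have "finite_measure (null_measure M)"
    by (rule finite_measureI) simp
  then have "{\<gamma> \<in> V. tau (\<lambda>_. (null_measure M, null_measure M)) \<gamma> \<in> UNIV} \<in>
      {{\<gamma> \<in> V. tau \<nu> \<gamma> \<in> U} | \<nu> U. (\<forall>i. \<nu> i \<in> signed_meas M) \<and> open U}"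
    by (force simp: signed_meas_def)
  then show ?thesis
    unfolding MX_topology_def by auto
qed

lemma openin_MX_topologyD:
  assumes "openin (MX_topology M V) W" and "\<gamma> \<in> W"
  shows "\<exists>F e. finite F \<and> (\<forall>\<nu>\<in>F. \<forall>i. \<nu> i \<in> signed_meas M) \<and> 0 < e \<and>
           (\<forall>\<eta>\<in>V. (\<forall>\<nu>\<in>F. \<bar>tau \<nu> \<eta> - tau \<nu> \<gamma>\<bar> < e) \<longrightarrow> \<eta> \<in> W)"
proof -
  have "generate_topology_on
      {{\<gamma> \<in> V. tau \<nu> \<gamma> \<in> U} | \<nu> U. (\<forall>i. \<nu> i \<in> signed_meas M) \<and> open U} W"
    using assms(1) by (simp add: MX_topology_def openin_topology_generated_by_iff)
  then show ?thesis
    using assms(2)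
  proof (induction rule: generate_topology_on.induct)
    case (Int a b)
    then obtain F1 e1 F2 e2 where
      "finite F1" "\<forall>\<nu>\<in>F1. \<forall>i. \<nu> i \<in> signed_meas M" "0 < e1"
      "\<forall>\<eta>\<in>V. (\<forall>\<nu>\<in>F1. \<bar>tau \<nu> \<eta> - tau \<nu> \<gamma>\<bar> < e1) \<longrightarrow> \<eta> \<in> a"
      "finite F2" "\<forall>\<nu>\<in>F2. \<forall>i. \<nu> i \<in> signed_meas M" "0 < e2"
      "\<forall>\<eta>\<in>V. (\<forall>\<nu>\<in>F2. \<bar>tau \<nu> \<eta> - tau \<nu> \<gamma>\<bar> < e2) \<longrightarrow> \<eta> \<in> b"
      by auto
    then show ?case
      by (intro exI[of _ "F1 \<union> F2"] exI[of _ "min e1 e2"]) auto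
  next
    case (UN K)
    then obtain k where "k \<in> K" "\<gamma> \<in> k" by blast
    with UN.IH[OF this] show ?case by blast
  next
    case (Basis w)
    then obtain \<nu> U where w: "w = {\<gamma> \<in> V. tau \<nu> \<gamma> \<in> U}" "\<forall>i. \<nu> i \<in> signed_meas M" "open U"
      by auto
    with Basis.prems have "tau \<nu> \<gamma> \<in> U" by simp
    then obtain e where "0 < e" "ball (tau \<nu> \<gamma>) e \<subseteq> U"
      using \<open>open U\<close> openE by blast
    then show ?case
      using w by (intro exI[of _ "{\<nu>}"] exI[of _ e]) (auto simp: dist_real_def subset_iff)
  qed simp
qed

lemma tau_sum:
  assumes "finite I"
    and "\<And>\<sigma> i. \<sigma> \<in> I \<Longrightarrow> integrable (fst (\<nu> i)) (\<lambda>x. g \<sigma> x $ i)"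
    and "\<And>\<sigma> i. \<sigma> \<in> I \<Longrightarrow> integrable (snd (\<nu> i)) (\<lambda>x. g \<sigma> x $ i)"
  shows "tau \<nu> (\<lambda>x. \<Sum>\<sigma>\<in>I. t \<sigma> *\<^sub>R g \<sigma> x) = (\<Sum>\<sigma>\<in>I. t \<sigma> * tau \<nu> (g \<sigma>))"
proof -
  have "sintegral (\<nu> i) (\<lambda>x. (\<Sum>\<sigma>\<in>I. t \<sigma> *\<^sub>R g \<sigma> x) $ i)
      = (\<Sum>\<sigma>\<in>I. t \<sigma> * sintegral (\<nu> i) (\<lambda>x. g \<sigma> x $ i))" for i
    using assms by (simp add: sintegral_def sum_subtractf[symmetric] right_diff_distrib)
  then show ?thesis
    unfolding tau_def by (simp add: sum_distrib_left sum.swap[of _ I])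
qed

lemma MbD:
  assumes "\<gamma> \<in> Mb M"
  shows "(\<lambda>x. \<gamma> x $ i) \<in> borel_measurable M" and "bounded (range (\<lambda>x. \<gamma> x $ i))"
  using assms by (auto simp: Mb_def)

lemma integrable_Mb_component:
  assumes "\<gamma> \<in> Mb M" and "finite_measure N" and "sets N = sets M"
  shows "integrable N (\<lambda>x. \<gamma> x $ i)"
proof -
  have "(\<lambda>x. \<gamma> x $ i) \<in> borel_measurable N"
    using MbD(1)[OF assms(1)] by (subst measurable_cong_sets[OF assms(3) refl])
  moreover have "bounded ((\<lambda>x. \<gamma> x $ i) ` space N)"
    by (rule bounded_subset[OF MbD(2)[OF assms(1)]]) auto
  ultimately show ?thesis
    by (rule finite_measure.integrable_bounded[OF assms(2)])
qed

locale haar_action = prob_space \<mu> for \<mu> :: "'g::topological_group_add measure" +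
  fixes M :: "'a measure" and T :: "'g \<Rightarrow> 'a \<Rightarrow> 'a"
  assumes space_M: "space M = UNIV"
    and sets_\<mu>: "sets \<mu> = sets borel"
    and haar_right: "\<And>g. distr \<mu> borel (\<lambda>\<sigma>. \<sigma> + g) = \<mu>"
    and act_add: "\<And>\<sigma> \<tau>. T (\<sigma> + \<tau>) = T \<sigma> \<circ> T \<tau>"
    and act_measurable: "(\<lambda>p. T (fst p) (snd p)) \<in> measurable (borel \<Otimes>\<^sub>M M) M"
begin

lemma space_\<mu>: "space \<mu> = UNIV"
  using sets_eq_imp_space_eq[OF sets_\<mu>] by simp

lemma measurable_act: "T \<sigma> \<in> measurable M M"
  using measurable_comp[OF measurable_Pair1' act_measurable, of \<sigma>] by (simp add: comp_def)

lemma Mb_comp_act: "\<gamma> \<in> Mb M \<Longrightarrow> \<gamma> \<circ> T \<sigma> \<in> Mb M"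
  using measurable_comp[OF measurable_act]
  by (auto simp: Mb_def comp_def intro: bounded_subset[of "range _"])

lemma measurable_orbit_component:
  "\<gamma> \<in> Mb M \<Longrightarrow> (\<lambda>(\<sigma>, x). \<gamma> (T \<sigma> x) $ i) \<in> borel_measurable (borel \<Otimes>\<^sub>M M)"
  unfolding split_beta' using measurable_comp[OF act_measurable MbD(1)] by (simp add: comp_def)

lemma orbit_integral:
  assumes \<gamma>: "\<gamma> \<in> Mb M" and N: "finite_measure N" "sets N = sets M"
  shows "(\<lambda>\<sigma>. \<integral>x. \<gamma> (T \<sigma> x) $ i \<partial>N) \<in> borel_measurable \<mu>"
    and "bounded (range (\<lambda>\<sigma>. \<integral>x. \<gamma> (T \<sigma> x) $ i \<partial>N))"
    and "(\<integral>\<sigma>. (\<integral>x. \<gamma> (T \<sigma> x) $ i \<partial>N) \<partial>\<mu>) = (\<integral>x. Ssym \<mu> T \<gamma> x $ i \<partial>N)"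
proof -
  interpret N: finite_measure N by (rule N(1))
  interpret pair_sigma_finite \<mu> N by unfold_locales
  obtain B where B: "\<And>x. \<bar>\<gamma> x $ i\<bar> \<le> B"
    using MbD(2)[OF \<gamma>] by (auto simp: bounded_real)
  have "sets (\<mu> \<Otimes>\<^sub>M N) = sets (borel \<Otimes>\<^sub>M M)"
    by (rule sets_pair_measure_cong) (use sets_\<mu> N(2) in auto)
  then have meas: "(\<lambda>(\<sigma>, x). \<gamma> (T \<sigma> x) $ i) \<in> borel_measurable (\<mu> \<Otimes>\<^sub>M N)"
    using measurable_orbit_component[OF \<gamma>] by (subst measurable_cong_sets[OF _ refl])
  show "(\<lambda>\<sigma>. \<integral>x. \<gamma> (T \<sigma> x) $ i \<partial>N) \<in> borel_measurable \<mu>"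
    using N.borel_measurable_lebesgue_integral[OF meas] by simp
  have "\<bar>\<integral>x. \<gamma> (T \<sigma> x) $ i \<partial>N\<bar> \<le> B * measure N (space N)" for \<sigma>
  proof -
    have "integrable N (\<lambda>x. \<gamma> (T \<sigma> x) $ i)"
      using integrable_Mb_component[OF Mb_comp_act[OF \<gamma>] N] by (simp add: comp_def)
    then have "\<bar>\<integral>x. \<gamma> (T \<sigma> x) $ i \<partial>N\<bar> \<le> (\<integral>x. B \<partial>N)"
      using B by (intro order_trans[OF integral_abs_bound] integral_mono) auto
    then show ?thesis by (simp add: mult.commute)
  qed
  then show "bounded (range (\<lambda>\<sigma>. \<integral>x. \<gamma> (T \<sigma> x) $ i \<partial>N))"
    unfolding bounded_real by blast
  have "finite_measure (\<mu> \<Otimes>\<^sub>M N)"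
    by (intro finite_measure_pair_measure) unfold_locales
  then have "integrable (\<mu> \<Otimes>\<^sub>M N) (\<lambda>(\<sigma>, x). \<gamma> (T \<sigma> x) $ i)"
    using meas B by (intro finite_measure.integrable_const_bound[where B=B]) auto
  then show "(\<integral>\<sigma>. (\<integral>x. \<gamma> (T \<sigma> x) $ i \<partial>N) \<partial>\<mu>) = (\<integral>x. Ssym \<mu> T \<gamma> x $ i \<partial>N)"
    by (simp add: Fubini_integral Ssym_def)
qed

lemma sintegral_orbit:
  assumes \<gamma>: "\<gamma> \<in> Mb M" and \<nu>: "\<nu> \<in> signed_meas M"
  shows "(\<lambda>\<sigma>. sintegral \<nu> (\<lambda>x. \<gamma> (T \<sigma> x) $ i)) \<in> borel_measurable \<mu>"
    and "bounded (range (\<lambda>\<sigma>. sintegral \<nu> (\<lambda>x. \<gamma> (T \<sigma> x) $ i)))"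
    and "(\<integral>\<sigma>. sintegral \<nu> (\<lambda>x. \<gamma> (T \<sigma> x) $ i) \<partial>\<mu>) = sintegral \<nu> (\<lambda>x. Ssym \<mu> T \<gamma> x $ i)"
proof -
  obtain p q where \<nu>_eq: "\<nu> = (p, q)"
    and p: "finite_measure p" "sets p = sets M" and q: "finite_measure q" "sets q = sets M"
    using \<nu> by (cases \<nu>) (auto simp: signed_meas_def)
  note orbit_p = orbit_integral[OF \<gamma> p] and orbit_q = orbit_integral[OF \<gamma> q]
  show "(\<lambda>\<sigma>. sintegral \<nu> (\<lambda>x. \<gamma> (T \<sigma> x) $ i)) \<in> borel_measurable \<mu>"
    using orbit_p(1) orbit_q(1) by (simp add: sintegral_def \<nu>_eq)
  show "bounded (range (\<lambda>\<sigma>. sintegral \<nu> (\<lambda>x. \<gamma> (T \<sigma> x) $ i)))"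
    unfolding sintegral_def \<nu>_eq fst_conv snd_conv
    by (intro bounded_minus_comp orbit_p(2) orbit_q(2))
  have "integrable \<mu> (\<lambda>\<sigma>. \<integral>x. \<gamma> (T \<sigma> x) $ i \<partial>N)"
    if "finite_measure N" "sets N = sets M" for N
    using orbit_integral(1,2)[OF \<gamma> that] by (intro integrable_bounded) (auto simp: space_\<mu>)
  then show "(\<integral>\<sigma>. sintegral \<nu> (\<lambda>x. \<gamma> (T \<sigma> x) $ i) \<partial>\<mu>) = sintegral \<nu> (\<lambda>x. Ssym \<mu> T \<gamma> x $ i)"
    using p q by (simp add: sintegral_def \<nu>_eq orbit_p(3) orbit_q(3))
qed

lemma tau_orbit:
  assumes \<gamma>: "\<gamma> \<in> Mb M" and \<nu>: "\<And>i. \<nu> i \<in> signed_meas M"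
  shows "(\<lambda>\<sigma>. tau \<nu> (\<gamma> \<circ> T \<sigma>)) \<in> borel_measurable \<mu>"
    and "bounded (range (\<lambda>\<sigma>. tau \<nu> (\<gamma> \<circ> T \<sigma>)))"
    and "expectation (\<lambda>\<sigma>. tau \<nu> (\<gamma> \<circ> T \<sigma>)) = tau \<nu> (Ssym \<mu> T \<gamma>)"
proof -
  note orbit = sintegral_orbit[OF \<gamma> \<nu>]
  have tau_eq: "(\<lambda>\<sigma>. tau \<nu> (\<gamma> \<circ> T \<sigma>)) = (\<lambda>\<sigma>. \<Sum>i\<in>UNIV. sintegral (\<nu> i) (\<lambda>x. \<gamma> (T \<sigma> x) $ i))"
    by (simp add: tau_def)
  show "(\<lambda>\<sigma>. tau \<nu> (\<gamma> \<circ> T \<sigma>)) \<in> borel_measurable \<mu>"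
    unfolding tau_eq using orbit(1) by measurable
  show "bounded (range (\<lambda>\<sigma>. tau \<nu> (\<gamma> \<circ> T \<sigma>)))"
    unfolding tau_eq by (intro bounded_sum_comp orbit(2)) simp
  have "integrable \<mu> (\<lambda>\<sigma>. sintegral (\<nu> i) (\<lambda>x. \<gamma> (T \<sigma> x) $ i))" for i
    using orbit(1,2) by (intro integrable_bounded) (auto simp: space_\<mu>)
  then show "expectation (\<lambda>\<sigma>. tau \<nu> (\<gamma> \<circ> T \<sigma>)) = tau \<nu> (Ssym \<mu> T \<gamma>)"
    unfolding tau_eq by (simp add: orbit(3) tau_def)
qed

lemma Ssym_comp_act:
  assumes "\<gamma> \<in> Mb M"
  shows "Ssym \<mu> T \<gamma> \<circ> T \<tau> = Ssym \<mu> T \<gamma>"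
proof -
  have "(\<integral>\<sigma>. \<gamma> (T \<sigma> (T \<tau> x)) $ i \<partial>\<mu>) = (\<integral>\<sigma>. \<gamma> (T \<sigma> x) $ i \<partial>\<mu>)" for x i
  proof -
    have "(\<lambda>\<sigma>. (\<sigma>, x)) \<in> measurable borel (borel \<Otimes>\<^sub>M M)"
      by (rule measurable_Pair2') (simp add: space_M)
    from measurable_comp[OF this measurable_orbit_component[OF assms]]
    have f: "(\<lambda>\<sigma>. \<gamma> (T \<sigma> x) $ i) \<in> borel_measurable borel"
      by (simp add: comp_def)
    have "(\<lambda>\<sigma>. \<sigma> + \<tau>) \<in> measurable \<mu> borel"
      by (subst measurable_cong_sets[OF sets_\<mu> refl])
        (intro borel_measurable_continuous_onI continuous_intros)
    then have "(\<integral>\<sigma>. \<gamma> (T (\<sigma> + \<tau>) x) $ i \<partial>\<mu>) = (\<integral>\<sigma>. \<gamma> (T \<sigma> x) $ i \<partial>distr \<mu> borel (\<lambda>\<sigma>. \<sigma> + \<tau>))"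
      using f by (simp add: integral_distr)
    then show ?thesis
      by (simp add: haar_right act_add)
  qed
  then show ?thesis
    by (simp add: Ssym_def fun_eq_iff)
qed

lemma Ssym_eq_self: "(\<And>\<sigma>. \<gamma> \<circ> T \<sigma> = \<gamma>) \<Longrightarrow> Ssym \<mu> T \<gamma> = \<gamma>"
  by (simp add: Ssym_def fun_eq_iff vec_eq_iff prob_space comp_def)

lemma Ssym_image_eq_Gamma_inv:
  assumes "\<Gamma> \<subseteq> Mb M" and "Ssym \<mu> T ` \<Gamma> \<subseteq> \<Gamma>"
  shows "Ssym \<mu> T ` \<Gamma> = Gamma_inv T \<Gamma>"
proof
  show "Ssym \<mu> T ` \<Gamma> \<subseteq> Gamma_inv T \<Gamma>"
    using assms by (auto simp: Gamma_inv_def intro!: Ssym_comp_act)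
  show "Gamma_inv T \<Gamma> \<subseteq> Ssym \<mu> T ` \<Gamma>"
    using Ssym_eq_self by (force simp: Gamma_inv_def)
qed

end

locale haar_symmetrization = haar_action \<mu> M T
  for \<mu> :: "'g::topological_group_add measure" and M :: "'a measure" and T +
  fixes V :: "('a \<Rightarrow> real^'n::finite) set"
  assumes V_Mb: "V \<subseteq> Mb M"
    and V_convex: "\<And>\<gamma>1 \<gamma>2 t. \<gamma>1 \<in> V \<Longrightarrow> \<gamma>2 \<in> V \<Longrightarrow> 0 < t \<Longrightarrow> t < 1
      \<Longrightarrow> (\<lambda>x. t *\<^sub>R \<gamma>1 x + (1 - t) *\<^sub>R \<gamma>2 x) \<in> V"
    and V_act: "\<And>\<gamma> \<sigma>. \<gamma> \<in> V \<Longrightarrow> \<gamma> \<circ> T \<sigma> \<in> V"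
    and V_Ssym: "\<And>\<gamma>. \<gamma> \<in> V \<Longrightarrow> Ssym \<mu> T \<gamma> \<in> V"
begin

lemma orbit_convex_comb_in_open:
  assumes \<gamma>: "\<gamma> \<in> V" and W: "openin (MX_topology M V) W" "Ssym \<mu> T \<gamma> \<in> W"
  shows "\<exists>I t. finite I \<and> (\<forall>\<sigma>\<in>I. 0 \<le> t \<sigma>) \<and> sum t I = 1 \<and>
           (\<lambda>x. \<Sum>\<sigma>\<in>I. t \<sigma> *\<^sub>R \<gamma> (T \<sigma> x)) \<in> W"
proof -
  have \<gamma>_Mb: "\<gamma> \<in> Mb M" using \<gamma> V_Mb by blast
  obtain F e where F: "finite F" "\<And>\<nu> i. \<nu> \<in> F \<Longrightarrow> \<nu> i \<in> signed_meas M" and "0 < e"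
    and nhd: "\<And>\<eta>. \<eta> \<in> V \<Longrightarrow> (\<forall>\<nu>\<in>F. \<bar>tau \<nu> \<eta> - tau \<nu> (Ssym \<mu> T \<gamma>)\<bar> < e) \<Longrightarrow> \<eta> \<in> W"
    using openin_MX_topologyD[OF W] by blast
  define \<phi> where "\<phi> \<nu> \<sigma> = tau \<nu> (\<gamma> \<circ> T \<sigma>)" for \<nu> \<sigma>
  have orbit: "\<phi> \<nu> \<in> borel_measurable \<mu>" "bounded (range (\<phi> \<nu>))"
    "expectation (\<phi> \<nu>) = tau \<nu> (Ssym \<mu> T \<gamma>)" if "\<nu> \<in> F" for \<nu>
    unfolding \<phi>_def using tau_orbit[OF \<gamma>_Mb F(2)[OF that]] by auto
  obtain I t where I: "finite I" "\<forall>\<sigma>\<in>I. 0 \<le> t \<sigma>" "sum t I = 1"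
    and approx: "\<forall>\<psi>\<in>\<phi> ` F. \<bar>(\<Sum>\<sigma>\<in>I. t \<sigma> * \<psi> \<sigma>) - expectation \<psi>\<bar> < e"
    using expectation_approx_by_convex_comb[of "\<phi> ` F" e] F(1) orbit(1,2) \<open>0 < e\<close>
    by (auto simp: space_\<mu>)
  define \<eta> where "\<eta> = (\<lambda>x. \<Sum>\<sigma>\<in>I. t \<sigma> *\<^sub>R \<gamma> (T \<sigma> x))"
  have "\<eta> \<in> V"
    unfolding \<eta>_def using convex_sum_pointwise[of V I "\<lambda>\<sigma>. \<gamma> \<circ> T \<sigma>" t] V_convex V_act[OF \<gamma>] I
    by (simp add: comp_def)
  moreover have "tau \<nu> \<eta> = (\<Sum>\<sigma>\<in>I. t \<sigma> * \<phi> \<nu> \<sigma>)" if "\<nu> \<in> F" for \<nu>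
  proof -
    have "integrable (fst (\<nu> i)) (\<lambda>x. (\<gamma> \<circ> T \<sigma>) x $ i) \<and>
        integrable (snd (\<nu> i)) (\<lambda>x. (\<gamma> \<circ> T \<sigma>) x $ i)" for \<sigma> i
      using F(2)[OF that, of i] integrable_Mb_component[OF Mb_comp_act[OF \<gamma>_Mb]]
      by (cases "\<nu> i") (auto simp: signed_meas_def)
    then show ?thesis
      unfolding \<eta>_def \<phi>_def using tau_sum[OF I(1), of \<nu> "\<lambda>\<sigma>. \<gamma> \<circ> T \<sigma>" t] by (simp add: comp_def)
  qed
  ultimately have "\<eta> \<in> W"
    using approx orbit(3) by (intro nhd) auto
  then show ?thesis
    using I unfolding \<eta>_def by blast
qed

lemma concave_usc_le_Ssym:
  fixes h :: "('a \<Rightarrow> real^'n) \<Rightarrow> ereal"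
  assumes concave: "\<And>\<gamma>1 \<gamma>2 t. \<gamma>1 \<in> V \<Longrightarrow> \<gamma>2 \<in> V \<Longrightarrow> 0 < t \<Longrightarrow> t < 1
      \<Longrightarrow> ereal t * h \<gamma>1 + ereal (1 - t) * h \<gamma>2 \<le> h (\<lambda>x. t *\<^sub>R \<gamma>1 x + (1 - t) *\<^sub>R \<gamma>2 x)"
    and usc: "usc_on (MX_topology M V) h"
    and invariant: "\<And>\<sigma>. h (\<gamma> \<circ> T \<sigma>) = h \<gamma>"
    and \<gamma>: "\<gamma> \<in> V"
  shows "h \<gamma> \<le> h (Ssym \<mu> T \<gamma>)"
proof (rule ccontr)
  assume less: "\<not> h \<gamma> \<le> h (Ssym \<mu> T \<gamma>)"
  define W where "W = {\<eta> \<in> V. h \<eta> < h \<gamma>}"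
  have "openin (MX_topology M V) W"
    using usc by (simp add: usc_on_def W_def)
  moreover have "Ssym \<mu> T \<gamma> \<in> W"
    using less V_Ssym[OF \<gamma>] by (simp add: W_def not_le)
  ultimately obtain I t where I: "finite I" "\<forall>\<sigma>\<in>I. 0 \<le> t \<sigma>" "sum t I = 1"
    and "(\<lambda>x. \<Sum>\<sigma>\<in>I. t \<sigma> *\<^sub>R \<gamma> (T \<sigma> x)) \<in> W"
    using orbit_convex_comb_in_open[OF \<gamma>] by blast
  moreover have "(\<lambda>x. \<Sum>\<sigma>\<in>I. t \<sigma> *\<^sub>R \<gamma> (T \<sigma> x)) \<in> {\<eta> \<in> V. h \<gamma> \<le> h \<eta>}"
  proof (rule convex_sum_pointwise[where f="\<lambda>\<sigma> x. \<gamma> (T \<sigma> x)"])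
    show "(\<lambda>x. s *\<^sub>R f x + (1 - s) *\<^sub>R g x) \<in> {\<eta> \<in> V. h \<gamma> \<le> h \<eta>}"
      if "f \<in> {\<eta> \<in> V. h \<gamma> \<le> h \<eta>}" "g \<in> {\<eta> \<in> V. h \<gamma> \<le> h \<eta>}" "0 < s" "s < 1" for f g s
      using concave_superlevel_set_convex[OF V_convex concave that] .
  qed (use I V_act[OF \<gamma>] invariant in \<open>auto simp: comp_def\<close>)
  ultimately show False
    by (auto simp: W_def dest: leD)
qed

end

theorem theorem2:
  fixes M :: "'a measure"
    and \<mu> :: "'g::{topological_group_add, t2_space} measure"
    and T :: "'g \<Rightarrow> 'a \<Rightarrow> 'a"
    and V \<Gamma> :: "('a \<Rightarrow> real^'n::finite) set"
    and H :: "('a \<Rightarrow> real^'n) \<Rightarrow> 'a measure \<Rightarrow> 'a measure \<Rightarrow> ereal"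
  assumes space_M: "space M = UNIV"
    and compact_G: "compact (UNIV :: 'g set)"
    and haar_prob: "prob_space \<mu>" "sets \<mu> = sets (borel :: 'g measure)"
    and haar_left: "\<And>g. distr \<mu> borel (\<lambda>\<sigma>. g + \<sigma>) = \<mu>"
    and haar_right: "\<And>g. distr \<mu> borel (\<lambda>\<sigma>. \<sigma> + g) = \<mu>"
    and act_zero: "T 0 = id"
    and act_add: "\<And>\<sigma> \<tau>. T (\<sigma> + \<tau>) = T \<sigma> \<circ> T \<tau>"
    and act_meas: "(\<lambda>p. T (fst p) (snd p)) \<in> measurable (borel \<Otimes>\<^sub>M M) M"
    and V_sub: "V \<subseteq> Mb M"
    and V_zero: "(\<lambda>x. 0) \<in> V"
    and V_add: "\<And>\<gamma>1 \<gamma>2. \<gamma>1 \<in> V \<Longrightarrow> \<gamma>2 \<in> V \<Longrightarrow> (\<lambda>x. \<gamma>1 x + \<gamma>2 x) \<in> V"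
    and V_scale: "\<And>c \<gamma>. \<gamma> \<in> V \<Longrightarrow> (\<lambda>x. c *\<^sub>R \<gamma> x) \<in> V"
    and V_closed: "\<And>\<gamma> \<sigma>. \<gamma> \<in> V \<Longrightarrow> \<gamma> \<circ> T \<sigma> \<in> V"
    and V_sym: "Ssym \<mu> T ` V \<subseteq> V"
    and Gamma_sub: "\<Gamma> \<subseteq> V"
    and H_fin: "\<And>\<gamma> Q P. \<gamma> \<in> V \<Longrightarrow> Q \<in> Prob M \<Longrightarrow> P \<in> Prob M \<Longrightarrow> H \<gamma> Q P \<noteq> \<infinity>"
    and H_concave: "\<And>Q P \<gamma>1 \<gamma>2 t. Q \<in> Prob M \<Longrightarrow> P \<in> Prob M \<Longrightarrow> \<gamma>1 \<in> V \<Longrightarrow> \<gamma>2 \<in> V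
        \<Longrightarrow> 0 < t \<Longrightarrow> t < 1
        \<Longrightarrow> ereal t * H \<gamma>1 Q P + ereal (1 - t) * H \<gamma>2 Q P
            \<le> H (\<lambda>x. t *\<^sub>R \<gamma>1 x + (1 - t) *\<^sub>R \<gamma>2 x) Q P"
    and H_usc: "\<And>Q P. Q \<in> Prob M \<Longrightarrow> P \<in> Prob M \<Longrightarrow> usc_on (MX_topology M V) (\<lambda>\<gamma>. H \<gamma> Q P)"
    and H_equiv: "\<And>\<sigma> \<gamma> Q P. \<gamma> \<in> V \<Longrightarrow> Q \<in> Prob M \<Longrightarrow> P \<in> Prob M
        \<Longrightarrow> H (\<gamma> \<circ> T \<sigma>) Q P = H \<gamma> (distr Q M (T \<sigma>)) (distr P M (T \<sigma>))"
  shows "(\<forall>Q P. Q \<in> Prob M \<longrightarrow> P \<in> Prob M \<longrightarrow> invariant_meas M T Q \<longrightarrow> invariant_meas M T P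
            \<longrightarrow> DH H \<Gamma> Q P \<le> DH H (Ssym \<mu> T ` \<Gamma>) Q P)
       \<and> (Ssym \<mu> T ` \<Gamma> \<subseteq> \<Gamma> \<longrightarrow>
            Ssym \<mu> T ` \<Gamma> = Gamma_inv T \<Gamma>
            \<and> (\<forall>Q P. Q \<in> Prob M \<longrightarrow> P \<in> Prob M \<longrightarrow> invariant_meas M T Q \<longrightarrow> invariant_meas M T P
                 \<longrightarrow> DH H \<Gamma> Q P = DH H (Gamma_inv T \<Gamma>) Q P))"
proof -
  have "haar_symmetrization \<mu> M T V"
    by (intro haar_symmetrization.intro haar_action.intro haar_action_axioms.intro
        haar_symmetrization_axioms.intro haar_prob(1))
      (use assms V_add[OF V_scale V_scale] in auto)
  then interpret haar_symmetrization \<mu> M T V .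
  have Ssym_ge: "H \<gamma> Q P \<le> H (Ssym \<mu> T \<gamma>) Q P"
    if "\<gamma> \<in> V" "Q \<in> Prob M" "P \<in> Prob M" "invariant_meas M T Q" "invariant_meas M T P"
    for \<gamma> Q P
  proof (rule concave_usc_le_Ssym)
    show "H (\<gamma> \<circ> T \<sigma>) Q P = H \<gamma> Q P" for \<sigma>
      using H_equiv[OF that(1-3)] that(4,5) by (simp add: invariant_meas_def)
  qed (use that H_concave H_usc in auto)
  have le_Ssym: "DH H \<Gamma> Q P \<le> DH H (Ssym \<mu> T ` \<Gamma>) Q P"
    if "Q \<in> Prob M" "P \<in> Prob M" "invariant_meas M T Q" "invariant_meas M T P" for Q P
    unfolding DH_def by (rule SUP_mono) (use Ssym_ge that Gamma_sub in blast)
  have "DH H (Gamma_inv T \<Gamma>) Q P \<le> DH H \<Gamma> Q P" for Q P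
    unfolding DH_def by (rule SUP_subset_mono) (auto simp: Gamma_inv_def)
  then show ?thesis
    using le_Ssym Ssym_image_eq_Gamma_inv[of \<Gamma>] Gamma_sub V_Mb by (auto intro: antisym)
qed

end
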